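(* Let $f:\mathfrak g\to\mathfrak g$ be Ad-covariant ($f(gXg^{-1})=gf(X)g^{-1}$). Let $T(t)\in\mathbf T_{m+1}$ be a smooth curve with $1-\alpha b_k\neq0$, put $\mathcal F_-=I+\alpha\mathcal E$, $\mathcal L=\mathcal F_--\alpha T$, $\mathcal T_1=\mathcal L\mathcal F_-^{-1}$, $\mathcal T_2=\mathcal F_-^{-1}\mathcal L$, $\mathcal A_1=\mathcal F_-\,\pi_-\big(\mathcal F_-^{-1}f(\mathcal T_1)\big)$, $\mathcal A_2=\pi_-\big(f(\mathcal T_2)\mathcal F_-^{-1}\big)\mathcal F_-$, and suppose $\dot{\mathcal T}_1=[\mathcal A_1,\mathcal T_1]$. Write $P_0(\mathcal A_1)=\mathrm{diag}(\mathbf a_1,\dots,\mathbf a_N)$, $P_0(\mathcal A_2)=\mathrm{diag}(\mathbf a'_1,\dots,\mathbf a'_N)$. Then $\mathbf a'_k=\mathbf a_{k+1}$ and there is $C$ independent of $k$ such that $\mathbf a_k=C+\sum_{j=1}^{k-1}\frac{\alpha\dot b_j}{1-\alpha b_j}$, $\mathbf a'_k=C+\sum_{j=1}^{k}\frac{\alpha\dot b_j}{1-\alpha b_j}$.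
   Context: Periodic lattice setting: $N\ge2$, $m\ge1$; $\mathfrak g=\{X(\lambda)\in gl(N)[\lambda,\lambda^{-1}]:\Omega X(\lambda)\Omega^{-1}=X(\omega\lambda)\}$, $\omega=e^{2\pi i/N}$, $\Omega=\mathrm{diag}(1,\omega,\dots,\omega^{N-1})$, matrix indices and subscripts modulo $N$; $\mathfrak g_p=\{\lambda^p\sum_{j-k\equiv p}x_{jk}E_{jk}\}$, $P_0$ projection onto $\mathfrak g_0$, $\pi_-$ projection onto $\oplus_{p<0}\mathfrak g_p$, $\pi_+$ onto $\oplus_{p\ge0}\mathfrak g_p$. $\alpha\ne0$ real; $\mathcal E=\lambda\sum_kE_{k+1,k}$; $\mathcal F_-^{-1}$ a formal power series in $\lambda$ (algebra tacitly completed). $\mathbf T_{m+1}$ = set of $T=\mathcal E+\sum_kb_kE_{kk}+\sum_{j=1}^m\lambda^{-j}\sum_ka_k^{(j)}E_{k,k+j}$. *)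

theory Defs
  imports "HOL-Analysis.Analysis"
begin

text \<open>Elements of the (completed) twisted loop algebra: X p j k is the (j,k) entry
  (indices 0..N-1, representing indices mod N) of the coefficient of lambda^p.\<close>
type_synonym lmat = "int \<Rightarrow> nat \<Rightarrow> nat \<Rightarrow> complex"

definition loop_alg :: "nat \<Rightarrow> lmat set" where
  "loop_alg N = {X. (\<forall>p j k. (N \<le> j \<or> N \<le> k) \<longrightarrow> X p j k = 0)
      \<and> (\<forall>p j k. X p j k \<noteq> 0 \<longrightarrow> (int j - int k - p) mod int N = 0)
      \<and> (\<exists>p0. \<forall>p<p0. \<forall>j k. X p j k = 0)}"

text \<open>Product of formal Laurent series (Cauchy product; finite sums for series
  bounded below).\<close>
definition lmul :: "nat \<Rightarrow> lmat \<Rightarrow> lmat \<Rightarrow> lmat" where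
  "lmul N X Y = (\<lambda>p j k. \<Sum>q\<in>{q. (\<exists>a b. X q a b \<noteq> 0) \<and> (\<exists>a b. Y (p - q) a b \<noteq> 0)}.
        \<Sum>l<N. X q j l * Y (p - q) l k)"

definition lone :: "nat \<Rightarrow> lmat" where
  "lone N = (\<lambda>p j k. if p = 0 \<and> j = k \<and> j < N then 1 else 0)"

definition ladd :: "lmat \<Rightarrow> lmat \<Rightarrow> lmat" where
  "ladd X Y = (\<lambda>p j k. X p j k + Y p j k)"

definition lsub :: "lmat \<Rightarrow> lmat \<Rightarrow> lmat" where
  "lsub X Y = (\<lambda>p j k. X p j k - Y p j k)"

definition lsmul :: "real \<Rightarrow> lmat \<Rightarrow> lmat" where
  "lsmul c X = (\<lambda>p j k. complex_of_real c * X p j k)"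

definition lbr :: "nat \<Rightarrow> lmat \<Rightarrow> lmat \<Rightarrow> lmat" where
  "lbr N X Y = lsub (lmul N X Y) (lmul N Y X)"

definition pi_minus :: "lmat \<Rightarrow> lmat" where
  "pi_minus X = (\<lambda>p j k. if p < 0 then X p j k else 0)"

definition P0 :: "lmat \<Rightarrow> lmat" where
  "P0 X = (\<lambda>p j k. if p = 0 then X p j k else 0)"

definition calE :: "nat \<Rightarrow> lmat" where
  "calE N = (\<lambda>p j k. if p = 1 \<and> j < N \<and> k < N \<and> j = Suc k mod N then 1 else 0)"

definition Fminus :: "nat \<Rightarrow> real \<Rightarrow> lmat" where
  "Fminus N \<alpha> = ladd (lone N) (lsmul \<alpha> (calE N))"

text \<open>F_-^{-1} = sum_{n>=0} (-alpha calE)^n, the formal power series in lambda;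
  (calE^n has entries 1 at ((k+n) mod N, k) in the coefficient of lambda^n).\<close>
definition Finv :: "nat \<Rightarrow> real \<Rightarrow> lmat" where
  "Finv N \<alpha> = (\<lambda>p j k. if 0 \<le> p \<and> j < N \<and> k < N \<and> j = (k + nat p) mod N
       then complex_of_real ((- \<alpha>) ^ nat p) else 0)"

text \<open>The element T = calE + sum_k b_k E_kk + sum_{j=1}^m lambda^{-j} sum_k a^{(j)}_k E_{k,k+j}
  of T_{m+1}; b k = b_k, a j k = a^{(j)}_k for representatives k < N.\<close>
definition Tmat :: "nat \<Rightarrow> nat \<Rightarrow> (nat \<Rightarrow> complex) \<Rightarrow> (nat \<Rightarrow> nat \<Rightarrow> complex) \<Rightarrow> lmat" where
  "Tmat N m b a = (\<lambda>p i k. if i < N \<and> k < N then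
      (if p = 1 then (if i = Suc k mod N then 1 else 0)
       else if p = 0 then (if i = k then b i else 0)
       else if - int m \<le> p \<and> p < 0 then (if k = (i + nat (- p)) mod N then a (nat (- p)) i else 0)
       else 0)
     else 0)"

definition calL :: "nat \<Rightarrow> nat \<Rightarrow> real \<Rightarrow> (nat \<Rightarrow> complex) \<Rightarrow> (nat \<Rightarrow> nat \<Rightarrow> complex) \<Rightarrow> lmat" where
  "calL N m \<alpha> b a = lsub (Fminus N \<alpha>) (lsmul \<alpha> (Tmat N m b a))"

definition ad_covariant :: "nat \<Rightarrow> (lmat \<Rightarrow> lmat) \<Rightarrow> bool" where
  "ad_covariant N f \<longleftrightarrow> (\<forall>X\<in>loop_alg N. f X \<in> loop_alg N) \<and>
     (\<forall>X g h. X \<in> loop_alg N \<longrightarrow> g \<in> loop_alg N \<longrightarrow> h \<in> loop_alg N \<longrightarrow>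
        lmul N g h = lone N \<longrightarrow> lmul N h g = lone N \<longrightarrow>
        f (lmul N (lmul N g X) h) = lmul N (lmul N g (f X)) h)"

definition smooth_curve :: "(real \<Rightarrow> complex) \<Rightarrow> bool" where
  "smooth_curve g \<longleftrightarrow> (\<forall>n t. (((\<lambda>h s. vector_derivative h (at s)) ^^ n) g) differentiable (at t))"

end

theory Submission
  imports Defs
begin

text \<open>Put Y = pi_minus (F_-^{-1} f(T1)). Since T2 = F_-^{-1} T1 F_-, Ad-covariance gives
  f(T2) F_-^{-1} = F_-^{-1} f(T1), hence A1 = F_- Y and A2 = Y F_-. As Y has only negative powers of
  lambda and F_- = I + alpha calE, both degree-0 diagonals are read off from the lambda^{-1}
  coefficient of Y, and a_{k+1} = alpha Y_{-1}(k, k+1) = a'_k.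
  Multiplying the Lax equation on the right by F_- and using T1 F_- = L turns it into
  dL/dt = A1 L - L A2. Here L, A1, A2 have no positive powers and L_0 = diag(1 - alpha b_k), so the
  degree-0 diagonal entry reads -alpha b_k' = (a_k - a'_k)(1 - alpha b_k). Combined with the shift
  this telescopes around the indices mod N.\<close>

section \<open>Formal Laurent series with matrix coefficients\<close>

definition vanishes_below :: "lmat \<Rightarrow> int \<Rightarrow> bool" where
  "vanishes_below X a \<longleftrightarrow> (\<forall>p<a. \<forall>j k. X p j k = 0)"

definition vanishes_above :: "lmat \<Rightarrow> int \<Rightarrow> bool" where
  "vanishes_above X u \<longleftrightarrow> (\<forall>p>u. \<forall>j k. X p j k = 0)"

lemma lmul_eq_sum_superset:
  assumes "finite I"
    and "\<And>q. q \<notin> I \<Longrightarrow> (\<forall>j l. X q j l = 0) \<or> (\<forall>l k. Y (p - q) l k = 0)"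
  shows "lmul N X Y p j k = (\<Sum>q\<in>I. \<Sum>l<N. X q j l * Y (p - q) l k)"
proof -
  let ?S = "{q. (\<exists>j l. X q j l \<noteq> 0) \<and> (\<exists>l k. Y (p - q) l k \<noteq> 0)}"
  have "?S \<subseteq> I" using assms(2) by blast
  then have "(\<Sum>q\<in>?S. \<Sum>l<N. X q j l * Y (p - q) l k) = (\<Sum>q\<in>I. \<Sum>l<N. X q j l * Y (p - q) l k)"
    by (intro sum.mono_neutral_left assms(1) ballI sum.neutral) auto
  then show ?thesis by (simp add: lmul_def)
qed

lemma lmul_vanishes_below:
  assumes "vanishes_below X a" "vanishes_below Y b"
  shows "vanishes_below (lmul N X Y) (a + b)"
  unfolding vanishes_below_def
proof (intro allI impI)
  fix p j k assume "p < a + b"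
  have "lmul N X Y p j k = (\<Sum>q\<in>{}. \<Sum>l<N. X q j l * Y (p - q) l k)"
  proof (rule lmul_eq_sum_superset)
    show "(\<forall>j l. X q j l = 0) \<or> (\<forall>l k. Y (p - q) l k = 0)" for q
      using assms \<open>p < a + b\<close> by (cases "q < a") (auto simp: vanishes_below_def)
  qed simp
  then show "lmul N X Y p j k = 0" by simp
qed

lemma lmul_vanishes_above:
  assumes "vanishes_above X a" "vanishes_above Y b"
  shows "vanishes_above (lmul N X Y) (a + b)"
  unfolding vanishes_above_def
proof (intro allI impI)
  fix p j k assume "p > a + b"
  have "lmul N X Y p j k = (\<Sum>q\<in>{}. \<Sum>l<N. X q j l * Y (p - q) l k)"
  proof (rule lmul_eq_sum_superset)
    show "(\<forall>j l. X q j l = 0) \<or> (\<forall>l k. Y (p - q) l k = 0)" for q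
      using assms \<open>p > a + b\<close> by (cases "q > a") (auto simp: vanishes_above_def)
  qed simp
  then show "lmul N X Y p j k = 0" by simp
qed

lemma sum_swap_nested:
  "(\<Sum>q\<in>A. \<Sum>l\<in>B. \<Sum>r\<in>C. \<Sum>m\<in>D. f q l r m) =
    (\<Sum>r\<in>C. \<Sum>m\<in>D. \<Sum>q\<in>A. \<Sum>l\<in>B. f q l r m)"
proof -
  have "(\<Sum>q\<in>A. \<Sum>l\<in>B. \<Sum>r\<in>C. \<Sum>m\<in>D. f q l r m) =
      (\<Sum>q\<in>A. \<Sum>r\<in>C. \<Sum>m\<in>D. \<Sum>l\<in>B. f q l r m)"
    by (intro sum.cong refl) (simp only: sum.swap[of _ B])
  also have "\<dots> = (\<Sum>r\<in>C. \<Sum>m\<in>D. \<Sum>q\<in>A. \<Sum>l\<in>B. f q l r m)"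
    by (simp only: sum.swap[of _ A])
  finally show ?thesis .
qed

lemma lmul_assoc:
  assumes X: "vanishes_below X a" and Y: "vanishes_below Y b" and Z: "vanishes_below Z c"
  shows "lmul N (lmul N X Y) Z = lmul N X (lmul N Y Z)"
proof (intro ext)
  fix p j k
  \<comment> \<open>Both windows are independent of the summation indices, so the sums can be interchanged.\<close>
  define IQ where "IQ = {a + b..p - c}"
  define IR where "IR = {a..p - b - c}"
  have XY: "vanishes_below (lmul N X Y) (a + b)" and YZ: "vanishes_below (lmul N Y Z) (b + c)"
    using assms by (blast intro: lmul_vanishes_below)+
  have "lmul N (lmul N X Y) Z p j k = (\<Sum>q\<in>IQ. \<Sum>l<N. lmul N X Y q j l * Z (p - q) l k)"
    using XY Z by (intro lmul_eq_sum_superset) (auto simp: IQ_def vanishes_below_def)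
  also have "\<dots> = (\<Sum>q\<in>IQ. \<Sum>l<N. (\<Sum>r\<in>IR. \<Sum>m<N. X r j m * Y (q - r) m l) * Z (p - q) l k)"
    using X Y by (intro sum.cong refl arg_cong2[where f = times] lmul_eq_sum_superset)
      (auto simp: IQ_def IR_def vanishes_below_def)
  also have "\<dots> = (\<Sum>r\<in>IR. \<Sum>m<N. \<Sum>q\<in>IQ. \<Sum>l<N. X r j m * Y (q - r) m l * Z (p - q) l k)"
    by (simp add: sum_distrib_right sum_swap_nested[where A = IQ])
  also have "\<dots> = (\<Sum>r\<in>IR. \<Sum>m<N. X r j m * lmul N Y Z (p - r) m k)"
  proof (intro sum.cong refl)
    fix r m assume "r \<in> IR"
    then have "lmul N Y Z (p - r) m k = (\<Sum>s\<in>(\<lambda>q. q - r) ` IQ. \<Sum>l<N. Y s m l * Z (p - r - s) l k)"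
      using Y Z by (intro lmul_eq_sum_superset) (auto simp: IQ_def IR_def vanishes_below_def image_iff)
    also have "\<dots> = (\<Sum>q\<in>IQ. \<Sum>l<N. Y (q - r) m l * Z (p - q) l k)"
      by (subst sum.reindex) (auto simp: inj_on_def)
    finally show "(\<Sum>q\<in>IQ. \<Sum>l<N. X r j m * Y (q - r) m l * Z (p - q) l k) = X r j m * lmul N Y Z (p - r) m k"
      by (simp add: sum_distrib_left mult.assoc)
  qed
  also have "\<dots> = lmul N X (lmul N Y Z) p j k"
    using X YZ by (intro lmul_eq_sum_superset[symmetric]) (auto simp: IR_def vanishes_below_def)
  finally show "lmul N (lmul N X Y) Z p j k = lmul N X (lmul N Y Z) p j k" .
qed

lemma lmul_lsub_distrib_right:
  assumes X: "vanishes_below X a" and Y: "vanishes_below Y a" and Z: "vanishes_below Z c"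
  shows "lmul N (lsub X Y) Z = lsub (lmul N X Z) (lmul N Y Z)"
proof (intro ext)
  fix p j k
  have window: "lmul N W Z p j k = (\<Sum>q\<in>{a..p - c}. \<Sum>l<N. W q j l * Z (p - q) l k)"
    if "vanishes_below W a" for W
    using that Z by (intro lmul_eq_sum_superset) (auto simp: vanishes_below_def)
  have XY: "vanishes_below (lsub X Y) a" using X Y by (simp add: vanishes_below_def lsub_def)
  have "lmul N (lsub X Y) Z p j k = (\<Sum>q\<in>{a..p - c}. \<Sum>l<N. lsub X Y q j l * Z (p - q) l k)"
    by (rule window[OF XY])
  also have "\<dots> = lmul N X Z p j k - lmul N Y Z p j k"
    unfolding window[OF X] window[OF Y] by (simp add: lsub_def left_diff_distrib sum_subtractf)
  finally show "lmul N (lsub X Y) Z p j k = lsub (lmul N X Z) (lmul N Y Z) p j k"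
    by (simp add: lsub_def)
qed

lemma lmul_lone_right:
  assumes "\<forall>p j k. N \<le> k \<longrightarrow> X p j k = 0"
  shows "lmul N X (lone N) = X"
proof (intro ext)
  fix p j k
  have "lmul N X (lone N) p j k = (\<Sum>q\<in>{p}. \<Sum>l<N. X q j l * lone N (p - q) l k)"
    by (rule lmul_eq_sum_superset) (auto simp: lone_def)
  also have "\<dots> = X p j k"
    using assms by (simp add: lone_def if_distrib[of "\<lambda>x. _ * x"] sum.delta cong: if_cong)
  finally show "lmul N X (lone N) p j k = X p j k" .
qed

lemma lmul_0_eq_sum:
  assumes "vanishes_above X 0" "vanishes_above Y 0"
  shows "lmul N X Y 0 j k = (\<Sum>l<N. X 0 j l * Y 0 l k)"
proof -
  have "lmul N X Y 0 j k = (\<Sum>q\<in>{0}. \<Sum>l<N. X q j l * Y (0 - q) l k)"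
  proof (rule lmul_eq_sum_superset)
    show "(\<forall>j l. X q j l = 0) \<or> (\<forall>l k. Y (0 - q) l k = 0)" if "q \<notin> {0}" for q :: int
      using assms that by (cases "q > 0") (auto simp: vanishes_above_def)
  qed simp
  then show ?thesis by simp
qed

lemma lbr_lmul_right_regroup:
  assumes G: "vanishes_below G g" and Y: "vanishes_below Y y" and T: "vanishes_below T c"
  shows "lmul N (lbr N (lmul N G Y) T) G =
    lsub (lmul N (lmul N G Y) (lmul N T G)) (lmul N (lmul N T G) (lmul N Y G))"
proof -
  have GY: "vanishes_below (lmul N G Y) (g + y)" using G Y by (rule lmul_vanishes_below)
  have "lmul N (lbr N (lmul N G Y) T) G =
      lsub (lmul N (lmul N (lmul N G Y) T) G) (lmul N (lmul N T (lmul N G Y)) G)"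
    unfolding lbr_def using lmul_vanishes_below[OF GY T] lmul_vanishes_below[OF T GY] G
    by (intro lmul_lsub_distrib_right) (auto simp: add.commute)
  also have "lmul N (lmul N (lmul N G Y) T) G = lmul N (lmul N G Y) (lmul N T G)"
    using GY T G by (rule lmul_assoc)
  also have "lmul N (lmul N T (lmul N G Y)) G = lmul N T (lmul N G (lmul N Y G))"
    using T GY G Y by (simp add: lmul_assoc)
  also have "\<dots> = lmul N (lmul N T G) (lmul N Y G)"
    by (rule lmul_assoc[symmetric, OF T G lmul_vanishes_below[OF Y G]])
  finally show ?thesis .
qed

lemma vanishes_below_pi_minus: "vanishes_below X a \<Longrightarrow> vanishes_below (pi_minus X) a"
  by (simp add: vanishes_below_def pi_minus_def)

lemma vanishes_above_pi_minus: "vanishes_above (pi_minus X) (- 1)"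
  by (simp add: vanishes_above_def pi_minus_def)

section \<open>The dressing factor F_-\<close>

lemma Fminus_0: "Fminus N \<alpha> 0 l k = (if l = k \<and> l < N then 1 else 0)"
  by (simp add: Fminus_def ladd_def lone_def lsmul_def calE_def)

lemma Fminus_1:
  "Fminus N \<alpha> 1 l k = (if l < N \<and> k < N \<and> l = Suc k mod N then complex_of_real \<alpha> else 0)"
  by (simp add: Fminus_def ladd_def lone_def lsmul_def calE_def)

lemma Fminus_eq_0: "q \<noteq> 0 \<Longrightarrow> q \<noteq> 1 \<Longrightarrow> Fminus N \<alpha> q l k = 0"
  by (simp add: Fminus_def ladd_def lone_def lsmul_def calE_def)

lemma vanishes_below_Fminus: "vanishes_below (Fminus N \<alpha>) 0"
  by (simp add: vanishes_below_def Fminus_eq_0)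

lemma vanishes_above_Fminus: "vanishes_above (Fminus N \<alpha>) 1"
  by (simp add: vanishes_above_def Fminus_eq_0)

lemma vanishes_below_Finv: "vanishes_below (Finv N \<alpha>) 0"
  by (simp add: vanishes_below_def Finv_def)

text \<open>(j + N - 1) mod N is the predecessor of j modulo N; the summand N keeps the natural
  number subtraction from truncating at j = 0.\<close>

lemma eq_Suc_mod_iff:
  assumes "j < N" "l < N"
  shows "j = Suc l mod N \<longleftrightarrow> l = (j + N - 1) mod N"
proof -
  have "Suc l mod N = (if Suc l = N then 0 else Suc l)"
    using assms by auto
  moreover have "(j + N - 1) mod N = (if j = 0 then N - 1 else j - 1)"
    using assms by (cases "j = 0") (auto simp: mod_if)
  ultimately show ?thesis using assms by auto
qed

lemma lmul_Fminus_right: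
  assumes "0 < N"
  shows "lmul N X (Fminus N \<alpha>) p j k =
    (if k < N then X p j k + complex_of_real \<alpha> * X (p - 1) j (Suc k mod N) else 0)"
proof -
  have "lmul N X (Fminus N \<alpha>) p j k = (\<Sum>q\<in>{p, p - 1}. \<Sum>l<N. X q j l * Fminus N \<alpha> (p - q) l k)"
    by (rule lmul_eq_sum_superset) (auto intro!: Fminus_eq_0)
  also have "\<dots> =
      (\<Sum>l<N. X p j l * Fminus N \<alpha> 0 l k) + (\<Sum>l<N. X (p - 1) j l * Fminus N \<alpha> 1 l k)"
    by simp
  also have "\<dots> = (if k < N then X p j k + complex_of_real \<alpha> * X (p - 1) j (Suc k mod N) else 0)"
    using assms by (simp add: Fminus_0 Fminus_1 if_distrib[of "\<lambda>x. _ * x"] sum.delta cong: if_cong)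
  finally show ?thesis .
qed

lemma lmul_Fminus_left:
  assumes "0 < N"
  shows "lmul N (Fminus N \<alpha>) X p j k =
    (if j < N then X p j k + complex_of_real \<alpha> * X (p - 1) ((j + N - 1) mod N) k else 0)"
proof -
  have "lmul N (Fminus N \<alpha>) X p j k = (\<Sum>q\<in>{0, 1}. \<Sum>l<N. Fminus N \<alpha> q j l * X (p - q) l k)"
    by (rule lmul_eq_sum_superset) (auto intro!: Fminus_eq_0)
  also have "\<dots> =
      (\<Sum>l<N. Fminus N \<alpha> 0 j l * X p l k) + (\<Sum>l<N. Fminus N \<alpha> 1 j l * X (p - 1) l k)"
    by simp
  also have "(\<Sum>l<N. Fminus N \<alpha> 1 j l * X (p - 1) l k) =
      (\<Sum>l<N. if l = (j + N - 1) mod N then (if j < N then complex_of_real \<alpha> * X (p - 1) l k else 0) else 0)"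
    by (intro sum.cong refl) (auto simp: Fminus_1 eq_Suc_mod_iff)
  finally show ?thesis
    using assms by (simp add: Fminus_0 if_distrib[of "\<lambda>x. x * _"] sum.delta cong: if_cong)
qed

lemma Finv_Fminus:
  assumes "0 < N"
  shows "lmul N (Finv N \<alpha>) (Fminus N \<alpha>) = lone N"
proof (intro ext)
  fix p j k
  show "lmul N (Finv N \<alpha>) (Fminus N \<alpha>) p j k = lone N p j k"
  proof (cases "0 < p")
    case True
    then have "nat p = Suc (nat (p - 1))" by simp
    moreover have "(Suc k mod N + nat (p - 1)) mod N = (k + Suc (nat (p - 1))) mod N"
      by (simp add: mod_add_left_eq)
    ultimately show ?thesis
      using assms True by (simp add: lmul_Fminus_right Finv_def lone_def)
  qed (use assms in \<open>auto simp: lmul_Fminus_right Finv_def lone_def\<close>)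
qed

lemma Fminus_Finv:
  assumes "0 < N"
  shows "lmul N (Fminus N \<alpha>) (Finv N \<alpha>) = lone N"
proof (intro ext)
  fix p j k
  show "lmul N (Fminus N \<alpha>) (Finv N \<alpha>) p j k = lone N p j k"
  proof (cases "0 < p \<and> j < N \<and> k < N")
    case True
    then have "nat p = Suc (nat (p - 1))" by auto
    moreover have "(j + N - 1) mod N = (k + nat (p - 1)) mod N \<longleftrightarrow> j = (k + Suc (nat (p - 1))) mod N"
      using True eq_Suc_mod_iff[of j N "(k + nat (p - 1)) mod N"] assms by (auto simp: mod_Suc_eq)
    ultimately show ?thesis
      using assms True by (simp add: lmul_Fminus_left Finv_def lone_def)
  qed (use assms in \<open>auto simp: lmul_Fminus_left Finv_def lone_def\<close>)
qed

lemma has_vector_derivative_lmul_Fminus_right: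
  assumes "0 < N" and "\<And>p j k. ((\<lambda>s. X s p j k) has_vector_derivative D p j k) (at t)"
  shows "((\<lambda>s. lmul N (X s) (Fminus N \<alpha>) p j k) has_vector_derivative
    lmul N D (Fminus N \<alpha>) p j k) (at t)"
  using assms by (simp add: lmul_Fminus_right) (auto intro!: derivative_eq_intros)

lemma diagonal_lmul_Fminus_shift:
  assumes N: "0 < N" and i: "i < N" and Y: "\<And>j k. Y 0 j k = 0"
  shows "lmul N Y (Fminus N \<alpha>) 0 i i = lmul N (Fminus N \<alpha>) Y 0 (Suc i mod N) (Suc i mod N)"
proof -
  have "(Suc i mod N + N - 1) mod N = i"
    using eq_Suc_mod_iff[of "Suc i mod N" N i] N i by simp
  then show ?thesis using N i Y by (simp add: lmul_Fminus_left lmul_Fminus_right)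
qed

section \<open>The twisted loop algebra\<close>

lemma loop_alg_vanishes_below: "X \<in> loop_alg N \<Longrightarrow> \<exists>a. vanishes_below X a"
  by (auto simp: loop_alg_def vanishes_below_def)

lemma loop_alg_outside_eq_0: "X \<in> loop_alg N \<Longrightarrow> N \<le> j \<or> N \<le> k \<Longrightarrow> X p j k = 0"
  unfolding loop_alg_def by blast

lemma loop_alg_dvd: "X \<in> loop_alg N \<Longrightarrow> X p j k \<noteq> 0 \<Longrightarrow> int N dvd (int j - int k - p)"
  unfolding loop_alg_def dvd_eq_mod_eq_0 by blast

lemma loop_alg_intro:
  assumes "\<And>p j k. N \<le> j \<or> N \<le> k \<Longrightarrow> X p j k = 0"
    and "\<And>p j k. X p j k \<noteq> 0 \<Longrightarrow> int N dvd (int j - int k - p)"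
    and "vanishes_below X a"
  shows "X \<in> loop_alg N"
  using assms unfolding loop_alg_def vanishes_below_def dvd_eq_mod_eq_0 by blast

lemma loop_alg_lmul:
  assumes X: "X \<in> loop_alg N" and Y: "Y \<in> loop_alg N"
  shows "lmul N X Y \<in> loop_alg N"
proof -
  obtain a b where "vanishes_below X a" "vanishes_below Y b"
    using loop_alg_vanishes_below X Y by blast
  show ?thesis
  proof (rule loop_alg_intro)
    show "lmul N X Y p j k = 0" if "N \<le> j \<or> N \<le> k" for p j k
      unfolding lmul_def using loop_alg_outside_eq_0[OF X] loop_alg_outside_eq_0[OF Y] that
      by (intro sum.neutral ballI) auto
    show "int N dvd (int j - int k - p)" if nz: "lmul N X Y p j k \<noteq> 0" for p j k
    proof -
      obtain q where "(\<Sum>l<N. X q j l * Y (p - q) l k) \<noteq> 0"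
        using nz unfolding lmul_def by (meson sum.not_neutral_contains_not_neutral)
      then obtain l where "X q j l * Y (p - q) l k \<noteq> 0"
        by (meson sum.not_neutral_contains_not_neutral)
      then have "int N dvd (int j - int l - q) + (int l - int k - (p - q))"
        using loop_alg_dvd[OF X] loop_alg_dvd[OF Y] by (intro dvd_add) auto
      then show ?thesis by (simp add: algebra_simps)
    qed
    show "vanishes_below (lmul N X Y) (a + b)"
      by (rule lmul_vanishes_below) fact+
  qed
qed

lemma loop_alg_lsub:
  assumes X: "X \<in> loop_alg N" and Y: "Y \<in> loop_alg N"
  shows "lsub X Y \<in> loop_alg N"
proof -
  obtain a b where "vanishes_below X a" "vanishes_below Y b"
    using loop_alg_vanishes_below X Y by blast
  show ?thesis
  proof (rule loop_alg_intro)
    show "lsub X Y p j k = 0" if "N \<le> j \<or> N \<le> k" for p j k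
      using loop_alg_outside_eq_0[OF X] loop_alg_outside_eq_0[OF Y] that by (simp add: lsub_def)
    show "int N dvd (int j - int k - p)" if "lsub X Y p j k \<noteq> 0" for p j k
      using loop_alg_dvd[OF X] loop_alg_dvd[OF Y] that unfolding lsub_def by (cases "X p j k = 0") auto
    show "vanishes_below (lsub X Y) (min a b)"
      using \<open>vanishes_below X a\<close> \<open>vanishes_below Y b\<close> by (simp add: vanishes_below_def lsub_def)
  qed
qed

lemma loop_alg_lsmul:
  assumes X: "X \<in> loop_alg N"
  shows "lsmul c X \<in> loop_alg N"
proof -
  obtain a where "vanishes_below X a" using loop_alg_vanishes_below X by blast
  then show ?thesis
    using loop_alg_outside_eq_0[OF X] loop_alg_dvd[OF X]
    by (intro loop_alg_intro) (auto simp: lsmul_def vanishes_below_def)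
qed

lemma dvd_diff_mod_left: "int N dvd (int (j mod N) - int k - p) \<longleftrightarrow> int N dvd (int j - int k - p)"
proof -
  have "int (j mod N) - int k - p = int j mod int N - (int k + p)" by (simp add: of_nat_mod)
  then show ?thesis by (simp add: dvd_eq_mod_eq_0 mod_diff_left_eq diff_diff_eq)
qed

lemma dvd_diff_mod_right: "int N dvd (int j - int (k mod N) - p) \<longleftrightarrow> int N dvd (int j - int k - p)"
proof -
  have "int j - int (k mod N) - p = - (int (k mod N) - int j - (- p))"
    and "int j - int k - p = - (int k - int j - (- p))" by simp_all
  then show ?thesis by (simp only: dvd_minus_iff dvd_diff_mod_left)
qed

lemma loop_alg_Fminus: "Fminus N \<alpha> \<in> loop_alg N"
proof (rule loop_alg_intro)
  show "Fminus N \<alpha> p j k = 0" if "N \<le> j \<or> N \<le> k" for p j k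
    using that by (auto simp: Fminus_def ladd_def lone_def lsmul_def calE_def)
  show "int N dvd (int j - int k - p)" if "Fminus N \<alpha> p j k \<noteq> 0" for p j k
  proof -
    have "p = 0 \<and> j = k \<or> p = 1 \<and> j = Suc k mod N"
      using that by (auto simp: Fminus_def ladd_def lone_def lsmul_def calE_def split: if_splits)
    then show ?thesis by (auto simp: dvd_diff_mod_left)
  qed
qed (rule vanishes_below_Fminus)

lemma loop_alg_Finv: "Finv N \<alpha> \<in> loop_alg N"
proof (rule loop_alg_intro)
  show "Finv N \<alpha> p j k = 0" if "N \<le> j \<or> N \<le> k" for p j k
    unfolding Finv_def using that by (intro if_not_P) auto
  show "int N dvd (int j - int k - p)" if "Finv N \<alpha> p j k \<noteq> 0" for p j k
  proof -
    have "0 \<le> p \<and> j = (k + nat p) mod N" using that by (auto simp: Finv_def split: if_splits)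
    then show ?thesis by (auto simp: dvd_diff_mod_left)
  qed
qed (rule vanishes_below_Finv)

lemma loop_alg_Tmat: "Tmat N m b a \<in> loop_alg N"
proof (rule loop_alg_intro)
  show "Tmat N m b a p j k = 0" if "N \<le> j \<or> N \<le> k" for p j k
    unfolding Tmat_def using that by (intro if_not_P) auto
  show "int N dvd (int j - int k - p)" if "Tmat N m b a p j k \<noteq> 0" for p j k
  proof -
    have "p = 0 \<and> j = k \<or> p = 1 \<and> j = Suc k mod N \<or> p < 0 \<and> k = (j + nat (- p)) mod N"
    proof (rule ccontr)
      assume "\<not> ?thesis"
      then have "Tmat N m b a p j k = 0" unfolding Tmat_def by simp
      then show False using that by simp
    qed
    then show ?thesis by (auto simp: dvd_diff_mod_left dvd_diff_mod_right)
  qed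
  show "vanishes_below (Tmat N m b a) (- int m)"
    by (simp add: vanishes_below_def Tmat_def)
qed

lemma loop_alg_calL: "calL N m \<alpha> b a \<in> loop_alg N"
  unfolding calL_def by (intro loop_alg_lsub loop_alg_lsmul loop_alg_Fminus loop_alg_Tmat)

lemma lmul_Finv_Fminus_cancel:
  assumes "0 < N" and X: "X \<in> loop_alg N"
  shows "lmul N (lmul N X (Finv N \<alpha>)) (Fminus N \<alpha>) = X"
proof -
  obtain c where "vanishes_below X c" using loop_alg_vanishes_below X by blast
  then have "lmul N (lmul N X (Finv N \<alpha>)) (Fminus N \<alpha>) =
      lmul N X (lmul N (Finv N \<alpha>) (Fminus N \<alpha>))"
    by (rule lmul_assoc[OF _ vanishes_below_Finv vanishes_below_Fminus])
  then show ?thesis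
    using Finv_Fminus[OF \<open>0 < N\<close>] lmul_lone_right loop_alg_outside_eq_0[OF X] by simp
qed

lemma lmul_Fminus_Finv_cancel:
  assumes "0 < N" and X: "X \<in> loop_alg N"
  shows "lmul N (lmul N X (Fminus N \<alpha>)) (Finv N \<alpha>) = X"
proof -
  obtain c where "vanishes_below X c" using loop_alg_vanishes_below X by blast
  then have "lmul N (lmul N X (Fminus N \<alpha>)) (Finv N \<alpha>) =
      lmul N X (lmul N (Fminus N \<alpha>) (Finv N \<alpha>))"
    by (rule lmul_assoc[OF _ vanishes_below_Fminus vanishes_below_Finv])
  then show ?thesis
    using Fminus_Finv[OF \<open>0 < N\<close>] lmul_lone_right loop_alg_outside_eq_0[OF X] by simp
qed

lemma ad_covariant_Finv_conj:
  assumes N: "0 < N" and f: "ad_covariant N f" and L: "L \<in> loop_alg N"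
  shows "lmul N (f (lmul N (Finv N \<alpha>) L)) (Finv N \<alpha>) =
    lmul N (Finv N \<alpha>) (f (lmul N L (Finv N \<alpha>)))"
proof -
  let ?G = "Fminus N \<alpha>" and ?H = "Finv N \<alpha>"
  obtain c where "vanishes_below L c" using loop_alg_vanishes_below L by blast
  then have LH: "vanishes_below (lmul N L ?H) c" using lmul_vanishes_below vanishes_below_Finv by fastforce
  have T: "lmul N L ?H \<in> loop_alg N" using L loop_alg_Finv by (rule loop_alg_lmul)
  then have "f (lmul N L ?H) \<in> loop_alg N" using f by (simp add: ad_covariant_def)
  then have HfT: "lmul N ?H (f (lmul N L ?H)) \<in> loop_alg N" using loop_alg_Finv loop_alg_lmul by blast
  have "lmul N ?H L = lmul N ?H (lmul N (lmul N L ?H) ?G)"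
    using lmul_Finv_Fminus_cancel[OF N L] by simp
  also have "\<dots> = lmul N (lmul N ?H (lmul N L ?H)) ?G"
    by (rule lmul_assoc[symmetric, OF vanishes_below_Finv LH vanishes_below_Fminus])
  finally have "f (lmul N ?H L) = lmul N (lmul N ?H (f (lmul N L ?H))) ?G"
    using f T loop_alg_Finv loop_alg_Fminus Finv_Fminus[OF N] Fminus_Finv[OF N]
    unfolding ad_covariant_def by simp
  then show ?thesis using lmul_Fminus_Finv_cancel[OF N HfT] by simp
qed

section \<open>The Lax equation on the diagonal\<close>

lemma vanishes_above_calL: "vanishes_above (calL N m \<alpha> b a) 0"
  unfolding vanishes_above_def
  by (auto simp: calL_def lsub_def lsmul_def Tmat_def Fminus_1 Fminus_eq_0)

lemma calL_0: "calL N m \<alpha> b a 0 j k = (if j = k \<and> j < N then 1 - complex_of_real \<alpha> * b j else 0)"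
  by (simp add: calL_def lsub_def lsmul_def Tmat_def Fminus_0)

lemma lax_diagonal:
  fixes N m :: nat and \<alpha> :: real
    and b :: "real \<Rightarrow> nat \<Rightarrow> complex" and a :: "real \<Rightarrow> nat \<Rightarrow> nat \<Rightarrow> complex"
  defines "L \<equiv> \<lambda>s. calL N m \<alpha> (b s) (a s)"
  assumes N: "0 < N" and \<alpha>: "\<alpha> \<noteq> 0" and i: "i < N"
    and Y: "vanishes_below Y y" "vanishes_above Y (- 1)"
    and lax: "\<And>p j k. ((\<lambda>s. lmul N (L s) (Finv N \<alpha>) p j k) has_vector_derivative
        lbr N (lmul N (Fminus N \<alpha>) Y) (lmul N (L t) (Finv N \<alpha>)) p j k) (at t)"
  shows "- complex_of_real \<alpha> * vector_derivative (\<lambda>s. b s i) (at t) =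
    (lmul N (Fminus N \<alpha>) Y 0 i i - lmul N Y (Fminus N \<alpha>) 0 i i) * (1 - complex_of_real \<alpha> * b t i)"
proof -
  let ?G = "Fminus N \<alpha>" and ?H = "Finv N \<alpha>"
  define D where "D = lmul N (lbr N (lmul N ?G Y) (lmul N (L t) ?H)) ?G"
  have L_alg: "L s \<in> loop_alg N" for s by (simp add: L_def loop_alg_calL)
  have L0: "L s 0 j i = (if j = i then 1 - complex_of_real \<alpha> * b s i else 0)"
    and L0': "L s 0 i j = (if j = i then 1 - complex_of_real \<alpha> * b s i else 0)" for s j
    using i by (auto simp: L_def calL_0)
  have L_undress: "lmul N (lmul N (L s) ?H) ?G = L s" for s
    using lmul_Finv_Fminus_cancel[OF N L_alg] .
  have "((\<lambda>s. lmul N (lmul N (L s) ?H) ?G 0 i i) has_vector_derivative D 0 i i) (at t)"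
    unfolding D_def by (rule has_vector_derivative_lmul_Fminus_right[OF N lax])
  then have "((\<lambda>s. L s 0 i i) has_vector_derivative D 0 i i) (at t)"
    by (simp only: L_undress)
  then have "((\<lambda>s. (1 - L s 0 i i) / complex_of_real \<alpha>) has_vector_derivative
      - D 0 i i / complex_of_real \<alpha>) (at t)"
    by (auto intro!: derivative_eq_intros)
  moreover have "(\<lambda>s. (1 - L s 0 i i) / complex_of_real \<alpha>) = (\<lambda>s. b s i)"
    using \<alpha> by (simp add: L0)
  ultimately have "- complex_of_real \<alpha> * vector_derivative (\<lambda>s. b s i) (at t) = D 0 i i"
    using \<alpha> by (simp add: vector_derivative_at)
  also have "D = lsub (lmul N (lmul N ?G Y) (L t)) (lmul N (L t) (lmul N Y ?G))"
  proof -
    obtain c where "vanishes_below (L t) c" using loop_alg_vanishes_below L_alg by blast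
    then show ?thesis unfolding D_def
      using lbr_lmul_right_regroup[OF vanishes_below_Fminus Y(1)
          lmul_vanishes_below[OF _ vanishes_below_Finv]] L_undress by simp
  qed
  also have "\<dots> 0 i i = (lmul N ?G Y 0 i i - lmul N Y ?G 0 i i) * (1 - complex_of_real \<alpha> * b t i)"
  proof -
    have "vanishes_above (lmul N ?G Y) 0" "vanishes_above (lmul N Y ?G) 0"
      using lmul_vanishes_above[OF vanishes_above_Fminus Y(2)]
        lmul_vanishes_above[OF Y(2) vanishes_above_Fminus] by simp_all
    moreover have "vanishes_above (L t) 0" by (simp add: L_def vanishes_above_calL)
    ultimately show ?thesis
      using i by (simp add: lsub_def lmul_0_eq_sum L0 L0' algebra_simps
          if_distrib[of "\<lambda>x. _ * x"] if_distrib[of "\<lambda>x. x * _"] sum.delta cong: if_cong)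
  qed
  finally show ?thesis .
qed

lemma cyclic_partial_sums:
  fixes u v d :: "nat \<Rightarrow> 'a :: comm_monoid_add"
  assumes N: "0 < N"
    and shift: "\<And>i. i < N \<Longrightarrow> v i = u (Suc i mod N)"
    and step: "\<And>i. i < N \<Longrightarrow> v i = u i + d i"
    and k: "1 \<le> k"
  shows "u (k mod N) = u (1 mod N) + (\<Sum>j = 1..k - 1. d (j mod N))"
    and "v (k mod N) = u (1 mod N) + (\<Sum>j = 1..k. d (j mod N))"
proof -
  have v_step: "v (k mod N) = u (k mod N) + d (k mod N)" for k
    using step N by simp
  show u_sum: "u (k mod N) = u (1 mod N) + (\<Sum>j = 1..k - 1. d (j mod N))"
    using k
  proof (induction k rule: dec_induct)
    case (step k)
    have "u (Suc k mod N) = v (k mod N)" using shift[of "k mod N"] N by (simp add: mod_Suc_eq)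
    also have "\<dots> = u (1 mod N) + ((\<Sum>j = 1..k - 1. d (j mod N)) + d (k mod N))"
      using v_step step.IH by (simp add: add.assoc)
    also have "\<dots> = u (1 mod N) + (\<Sum>j = 1..Suc k - 1. d (j mod N))"
      using step.hyps by (cases k) simp_all
    finally show ?case .
  qed simp
  show "v (k mod N) = u (1 mod N) + (\<Sum>j = 1..k. d (j mod N))"
    using v_step u_sum k by (cases k) (simp_all add: add.assoc)
qed

theorem mainTheorem12:
  fixes N m :: nat and \<alpha> :: real and f :: "lmat \<Rightarrow> lmat"
    and b :: "real \<Rightarrow> nat \<Rightarrow> complex" and a :: "real \<Rightarrow> nat \<Rightarrow> nat \<Rightarrow> complex"
  assumes "N \<ge> 2" and "m \<ge> 1" and "\<alpha> \<noteq> 0"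
    and "ad_covariant N f"
    and "\<forall>k<N. smooth_curve (\<lambda>t. b t k)"
    and "\<forall>j\<in>{1..m}. \<forall>k<N. smooth_curve (\<lambda>t. a t j k)"
    and "\<forall>t. \<forall>k<N. 1 - complex_of_real \<alpha> * b t k \<noteq> 0"
  defines "T1 \<equiv> \<lambda>t. lmul N (calL N m \<alpha> (b t) (a t)) (Finv N \<alpha>)"
    and "T2 \<equiv> \<lambda>t. lmul N (Finv N \<alpha>) (calL N m \<alpha> (b t) (a t))"
    and "A1 \<equiv> \<lambda>t. lmul N (Fminus N \<alpha>) (pi_minus (lmul N (Finv N \<alpha>) (f (lmul N (calL N m \<alpha> (b t) (a t)) (Finv N \<alpha>)))))"
    and "A2 \<equiv> \<lambda>t. lmul N (pi_minus (lmul N (f (lmul N (Finv N \<alpha>) (calL N m \<alpha> (b t) (a t)))) (Finv N \<alpha>))) (Fminus N \<alpha>)"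
  assumes "\<forall>t p i k. ((\<lambda>s. T1 s p i k) has_vector_derivative (lbr N (A1 t) (T1 t) p i k)) (at t)"
  shows "\<forall>t. (\<forall>k\<in>{1..N}. P0 (A2 t) 0 (k mod N) (k mod N) = P0 (A1 t) 0 (Suc k mod N) (Suc k mod N))
     \<and> (\<exists>C. \<forall>k\<in>{1..N}.
          P0 (A1 t) 0 (k mod N) (k mod N) = C + (\<Sum>j=1..k-1. complex_of_real \<alpha> * vector_derivative (\<lambda>s. b s (j mod N)) (at t) / (1 - complex_of_real \<alpha> * b t (j mod N)))
        \<and> P0 (A2 t) 0 (k mod N) (k mod N) = C + (\<Sum>j=1..k. complex_of_real \<alpha> * vector_derivative (\<lambda>s. b s (j mod N)) (at t) / (1 - complex_of_real \<alpha> * b t (j mod N))))"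
proof -
  \<comment> \<open>assms(8-11) are the definitions of T1, T2, A1, A2.\<close>
  let ?G = "Fminus N \<alpha>" and ?H = "Finv N \<alpha>"
  define Y where "Y t = pi_minus (lmul N ?H (f (T1 t)))" for t
  define d where "d t j = complex_of_real \<alpha> * vector_derivative (\<lambda>s. b s j) (at t) /
    (1 - complex_of_real \<alpha> * b t j)" for t j
  have N: "0 < N" using assms(1) by simp
  have Y_below: "\<exists>y. vanishes_below (Y t) y" for t
  proof -
    have "f (T1 t) \<in> loop_alg N"
      using assms(4) loop_alg_lmul[OF loop_alg_calL loop_alg_Finv] unfolding T1_def ad_covariant_def by blast
    then show ?thesis
      unfolding Y_def by (meson loop_alg_Finv loop_alg_lmul loop_alg_vanishes_below vanishes_below_pi_minus)
  qed
  have Y_above: "vanishes_above (Y t) (- 1)" for t by (simp add: Y_def vanishes_above_pi_minus)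
  have A1: "A1 t = lmul N ?G (Y t)" for t by (simp add: A1_def Y_def T1_def)
  have A2: "A2 t = lmul N (Y t) ?G" for t
    using ad_covariant_Finv_conj[OF N assms(4) loop_alg_calL] by (simp add: A2_def Y_def T1_def)
  have shift: "A2 t 0 i i = A1 t 0 (Suc i mod N) (Suc i mod N)" if "i < N" for t i
    unfolding A1 A2 using Y_above that N by (intro diagonal_lmul_Fminus_shift) (auto simp: vanishes_above_def)
  have step: "A2 t 0 i i = A1 t 0 i i + d t i" if i: "i < N" for t i
  proof -
    obtain y where "vanishes_below (Y t) y" using Y_below by blast
    then have "- complex_of_real \<alpha> * vector_derivative (\<lambda>s. b s i) (at t) =
        (A1 t 0 i i - A2 t 0 i i) * (1 - complex_of_real \<alpha> * b t i)"
      unfolding A1 A2 using spec[OF assms(12), of t] A1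
      by (intro lax_diagonal[where m = m and a = a, OF N assms(3) i _ Y_above]) (simp_all add: T1_def)
    then show ?thesis using assms(7) i by (simp add: d_def field_simps)
  qed
  show ?thesis
    using cyclic_partial_sums[where u = "\<lambda>i. A1 t 0 i i" and v = "\<lambda>i. A2 t 0 i i" and d = "d t" for t,
        OF N shift step]
    by (auto simp: P0_def d_def mod_Suc_eq)
qed

end
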